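(* Let $X_1,X_2,\dots$ be i.i.d. Bernoulli random variables with $\Pr\{X_i=1\}=1-\Pr\{X_i=0\}=p\in(0,1)$, let $\gamma$ be a positive integer, and let $\mathbf n$ be the random integer satisfying $\sum_{i=1}^{\mathbf n-1}X_i<\gamma=\sum_{i=1}^{\mathbf n}X_i$ (the number of trials needed to obtain $\gamma$ successes). For $z,p\in(0,1)$ let $\mathscr{M}(z,p)=z\ln\frac pz+(1-z)\ln\frac{1-p}{1-z}$ and $$\Delta=\min\left\{\frac12,\ \frac{C_{\mathrm{BE}}[z^2+(1-z)^2]}{\sqrt{\gamma(1-z)}}\right\}.$$ Then $$\Pr\Big\{\frac{\gamma}{\mathbf n}\le z\Big\}\le\Big(\frac12+\Delta\Big)\exp\Big(\frac\gamma z\mathscr{M}(z,p)\Big)\quad\text{for } z\in(0,p)\text{ such that }\tfrac\gamma z\text{ is an integer},$$ $$\Pr\Big\{\frac{\gamma}{\mathbf n}\ge z\Big\}\le\Big(\frac12+\Delta\Big)\exp\Big(\frac\gamma z\mathscr{M}(z,p)\Big)\quad\text{for } z\in(p,1)\text{ such that }\tfrac\gamma z\text{ is an integer}.$$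
   Context: $C_{\mathrm{BE}}$ denotes the absolute constant in the Berry–Esseen inequality: for i.i.d. $Y_1,Y_2,\dots$ distributed as $Y$ with $\mathbb{E}[Y]=0$, $\mathbb{E}[Y^2]>0$, $\mathbb{E}[|Y|^3]<\infty$, the cdf $F_n$ of $\sum_{i=1}^nY_i/\sqrt{n\mathbb{E}[Y^2]}$ satisfies $|F_n(y)-\Phi(y)|\le\frac{C_{\mathrm{BE}}}{\sqrt n}\frac{\mathbb{E}[|Y|^3]}{\mathbb{E}^{3/2}[Y^2]}$ for all $y,n$, where $\Phi$ is the standard normal cdf. *)

theory Defs
  imports "HOL-Probability.Probability"
begin

definition std_normal_cdf :: "real \<Rightarrow> real" where
  "std_normal_cdf y = measure (density lborel std_normal_density) {..y}"

definition berry_esseen_const :: "real \<Rightarrow> bool" where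
  "berry_esseen_const C \<longleftrightarrow>
    (\<forall>\<mu> :: real measure.
       prob_space \<mu> \<and> sets \<mu> = sets borel \<and> integrable \<mu> (\<lambda>y. \<bar>y\<bar> ^ 3) \<and>
       (\<integral>y. y \<partial>\<mu>) = 0 \<and> (\<integral>y. y\<^sup>2 \<partial>\<mu>) > 0 \<longrightarrow>
       (\<forall>n::nat. n > 0 \<longrightarrow> (\<forall>y::real.
          \<bar>measure (PiM {..<n} (\<lambda>_. \<mu>))
              {\<omega> \<in> space (PiM {..<n} (\<lambda>_. \<mu>)).
                 (\<Sum>i<n. \<omega> i) / sqrt (real n * (\<integral>t. t\<^sup>2 \<partial>\<mu>)) \<le> y}
            - std_normal_cdf y\<bar>
          \<le> C / sqrt (real n) * (\<integral>t. \<bar>t\<bar> ^ 3 \<partial>\<mu>) / (\<integral>t. t\<^sup>2 \<partial>\<mu>) powr (3/2))))"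

definition rateM :: "real \<Rightarrow> real \<Rightarrow> real" where
  "rateM z p = z * ln (p / z) + (1 - z) * ln ((1 - p) / (1 - z))"

text \<open>Number of trials needed to obtain gamma successes: the least m with
  X_1 + ... + X_m = gamma (for 0/1-valued X this is the n with
  sum_{i<n} X_i < gamma = sum_{i\<le>n} X_i).\<close>
definition trials_needed :: "(nat \<Rightarrow> 'a \<Rightarrow> real) \<Rightarrow> nat \<Rightarrow> 'a \<Rightarrow> nat" where
  "trials_needed X \<gamma> \<omega> = (LEAST m. (\<Sum>i\<in>{1..m}. X i \<omega>) = real \<gamma>)"

end

theory Submission
  imports Defs "HOL-Real_Asymp.Real_Asymp"
begin

text \<open>Write m = \<gamma> / z. Almost surely the walk S_k = X_1 + ... + X_k reaches \<gamma>, so the first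
  passage time n is a genuine hitting time; as the walk is monotone, \<gamma> / n \<le> z (that is, n \<ge> m)
  forces S_m \<le> m z, and \<gamma> / n \<ge> z forces S_m \<ge> m z. With S_m ~ Bin(m, p), changing the success
  probability from p to z multiplies the probability of j successes by
  exp (m M(z, p) + (j - m z) (ln (p / z) - ln ((1 - p) / (1 - z)))), which is at most exp (m M(z, p))
  on the relevant tail. Under Bin(m, z) the point m z is the mean, and the Berry-Esseen inequality
  for the centred Bernoulli(z) summands (or their negatives) bounds either side by 1/2 + \<Delta>.\<close>

lemma std_normal_cdf_zero: "std_normal_cdf 0 = 1/2"
proof -
  let ?d = std_normal_density
  have integrable: "integrable lborel (\<lambda>x. indicator A x * ?d x)" if "A \<in> sets borel" for A :: "real set"
    using integrable_mult_indicator[of A lborel ?d] that integrable_normal_density[of 0 1] by simp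
  have reflect: "(\<integral>x. indicator {..0} x * ?d x \<partial>lborel) = (\<integral>x. indicator {0..} x * ?d x \<partial>lborel)"
  proof -
    have "(\<integral>x. indicator {..0} x * ?d x \<partial>lborel)
        = (\<integral>x. indicator {..0} (0 + -1 * x) * ?d (0 + -1 * x) \<partial>lborel)"
      using lborel_integral_real_affine[of "-1" "\<lambda>x. indicator {..0} x * ?d x" 0] by simp
    also have "\<dots> = (\<integral>x. indicator {0..} x * ?d x \<partial>lborel)"
      by (rule Bochner_Integration.integral_cong) (auto simp: std_normal_density_def indicator_def)
    finally show ?thesis .
  qed
  have "(\<integral>x. indicator {0..} x * ?d x \<partial>lborel) = (\<integral>x. indicator {0<..} x * ?d x \<partial>lborel)"
    by (rule integral_cong_AE)
      (use AE_lborel_singleton[of 0] in \<open>auto elim!: eventually_mono simp: indicator_def\<close>)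
  moreover have "(\<integral>x. indicator {..0} x * ?d x \<partial>lborel) + (\<integral>x. indicator {0<..} x * ?d x \<partial>lborel) = 1"
  proof -
    have "(\<integral>x. indicator {..0} x * ?d x \<partial>lborel) + (\<integral>x. indicator {0<..} x * ?d x \<partial>lborel)
        = (\<integral>x. indicator {..0} x * ?d x + indicator {0<..} x * ?d x \<partial>lborel)"
      by (rule Bochner_Integration.integral_add[symmetric]) (auto intro!: integrable)
    also have "\<dots> = (\<integral>x. ?d x \<partial>lborel)"
      by (rule Bochner_Integration.integral_cong) (auto simp: indicator_def)
    finally show ?thesis using integral_normal_density[of 0 1] by simp
  qed
  moreover have "std_normal_cdf 0 = (\<integral>x. indicator {..0} x * ?d x \<partial>lborel)"
  proof -
    have "emeasure (density lborel ?d) {..0} = (\<integral>\<^sup>+x. ennreal (indicator {..0} x * ?d x) \<partial>lborel)"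
      by (subst emeasure_density) (auto intro!: nn_integral_cong simp: indicator_def)
    also have "\<dots> = ennreal (\<integral>x. indicator {..0} x * ?d x \<partial>lborel)"
      by (rule nn_integral_eq_integral) (auto intro!: integrable)
    finally show ?thesis
      unfolding std_normal_cdf_def measure_def by (simp add: integral_nonneg_AE)
  qed
  ultimately show ?thesis using reflect by simp
qed

lemma sum_bool_card:
  fixes f :: "bool \<Rightarrow> real"
  assumes "finite I"
  shows "(\<Sum>i\<in>I. f (h i))
    = real (card {i\<in>I. h i}) * f True + (real (card I) - real (card {i\<in>I. h i})) * f False"
proof -
  have "(\<Sum>i\<in>I. f (h i)) = (\<Sum>i\<in>{i\<in>I. h i}. f (h i)) + (\<Sum>i\<in>{i\<in>I. \<not> h i}. f (h i))"
    using assms by (subst sum.union_disjoint[symmetric]) (auto intro!: sum.cong)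
  also have "\<dots> = real (card {i\<in>I. h i}) * f True + real (card {i\<in>I. \<not> h i}) * f False"
    by simp
  also have "card {i\<in>I. \<not> h i} = card I - card {i\<in>I. h i}"
    using assms by (subst card_Diff_subset[symmetric]) (auto intro!: arg_cong[where f=card])
  finally show ?thesis
    using assms by (simp add: of_nat_diff card_mono)
qed

lemma PiM_eq_distr_Pi_pmf:
  fixes Q :: "real pmf" and I :: "'i set"
  assumes fin: "finite I" and ne: "I \<noteq> {}"
  shows "PiM I (\<lambda>_. distr (measure_pmf Q) borel id)
    = distr (measure_pmf (Pi_pmf I d (\<lambda>_. Q))) (PiM I (\<lambda>_. borel)) (\<lambda>x. \<lambda>i\<in>I. x i)"
proof -
  let ?P = "Pi_pmf I d (\<lambda>_. Q)"
  have "prob_space.indep_vars (measure_pmf ?P) (\<lambda>_. count_space UNIV) (\<lambda>x f. f x) I"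
    by (rule indep_vars_Pi_pmf[OF fin])
  then have indep: "prob_space.indep_vars (measure_pmf ?P) (\<lambda>_. borel) (\<lambda>i f. id (f i)) I"
    by (rule prob_space.indep_vars_compose2[OF measure_pmf.prob_space_axioms]) auto
  have component: "distr (measure_pmf ?P) borel (\<lambda>f. f i) = distr (measure_pmf Q) borel id"
    if "i \<in> I" for i
  proof -
    have "distr (measure_pmf ?P) borel (\<lambda>f. f i)
        = distr (distr (measure_pmf ?P) (count_space UNIV) (\<lambda>f. f i)) borel id"
      by (subst distr_distr) (auto simp: comp_def)
    also have "distr (measure_pmf ?P) (count_space UNIV) (\<lambda>f. f i) = measure_pmf (map_pmf (\<lambda>f. f i) ?P)"
      by (simp add: map_pmf_rep_eq)
    also have "map_pmf (\<lambda>f. f i) ?P = Q"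
      using that by (simp add: Pi_pmf_component fin)
    finally show ?thesis .
  qed
  have "distr (measure_pmf ?P) (PiM I (\<lambda>_. borel)) (\<lambda>x. \<lambda>i\<in>I. id (x i))
      = PiM I (\<lambda>i. distr (measure_pmf ?P) borel (\<lambda>f. id (f i)))"
    using prob_space.indep_vars_iff_distr_eq_PiM'[OF measure_pmf.prob_space_axioms ne,
        where M'="\<lambda>_. borel" and X="\<lambda>i f. id (f i)"] indep by auto
  also have "\<dots> = PiM I (\<lambda>_. distr (measure_pmf Q) borel id)"
    by (rule PiM_cong) (auto simp: component)
  finally show ?thesis by simp
qed

lemma measure_PiM_bernoulli_sum:
  fixes f :: "bool \<Rightarrow> real" and I :: "'i set"
  assumes fin: "finite I" and ne: "I \<noteq> {}" and w: "0 \<le> w" "w \<le> 1" and B: "B \<in> sets borel"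
  shows "measure (PiM I (\<lambda>_. distr (measure_pmf (map_pmf f (bernoulli_pmf w))) borel id))
            {\<omega> \<in> space (PiM I (\<lambda>_. borel)). (\<Sum>i\<in>I. \<omega> i) \<in> B}
       = measure_pmf.prob (binomial_pmf (card I) w)
            {j. real j * f True + (real (card I) - real j) * f False \<in> B}"
proof -
  let ?Q = "map_pmf f (bernoulli_pmf w)"
  let ?A = "{\<omega> \<in> space (PiM I (\<lambda>_. borel)). (\<Sum>i\<in>I. \<omega> i) \<in> B}"
  have "?A \<in> sets (PiM I (\<lambda>_. borel))"
    using B by measurable
  then have "measure (PiM I (\<lambda>_. distr (measure_pmf ?Q) borel id)) ?A
      = measure_pmf.prob (Pi_pmf I (f False) (\<lambda>_. ?Q)) {x. (\<Sum>i\<in>I. x i) \<in> B}"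
    by (subst PiM_eq_distr_Pi_pmf[OF fin ne, of ?Q "f False"], subst measure_distr)
      (auto intro!: arg_cong[where f="measure _"] simp: space_PiM)
  also have "Pi_pmf I (f False) (\<lambda>_. ?Q) = map_pmf (\<lambda>h. f \<circ> h) (Pi_pmf I False (\<lambda>_. bernoulli_pmf w))"
    by (rule Pi_pmf_map) (auto simp: fin)
  also have "measure_pmf.prob \<dots> {x. (\<Sum>i\<in>I. x i) \<in> B}
      = measure_pmf.prob (map_pmf (\<lambda>h. card {i\<in>I. h i}) (Pi_pmf I False (\<lambda>_. bernoulli_pmf w)))
          {j. real j * f True + (real (card I) - real j) * f False \<in> B}"
    by (simp add: sum_bool_card[OF fin] vimage_def)
  also have "map_pmf (\<lambda>h. card {i\<in>I. h i}) (Pi_pmf I False (\<lambda>_. bernoulli_pmf w)) = binomial_pmf (card I) w"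
    using binomial_pmf_altdef'[OF fin refl, of w False] w by simp
  finally show ?thesis .
qed

lemma powr_three_halves: "0 \<le> (x::real) \<Longrightarrow> x powr (3/2) = x * sqrt x"
  using powr_add[of x 1 "1/2"] by (cases "x = 0") (simp_all add: powr_half_sqrt)

lemma berry_esseen_centred_bernoulli:
  assumes C: "berry_esseen_const C" and w: "0 < w" "w < 1" and K: "K > 0"
    and \<sigma>: "\<sigma> = 1 \<or> \<sigma> = -1"
  defines "\<mu> \<equiv> distr (measure_pmf (map_pmf (\<lambda>b. \<sigma> * (of_bool b - w)) (bernoulli_pmf w))) borel id"
  shows "\<bar>measure (PiM {..<K} (\<lambda>_. \<mu>))
        {\<omega> \<in> space (PiM {..<K} (\<lambda>_. \<mu>)). (\<Sum>i<K. \<omega> i) / sqrt (real K * (w * (1 - w))) \<le> 0} - 1/2\<bar>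
      \<le> C * (w\<^sup>2 + (1 - w)\<^sup>2) / sqrt (real K * w * (1 - w))"
proof -
  have integral_\<mu>: "integral\<^sup>L \<mu> g = w * g (\<sigma> * (1 - w)) + (1 - w) * g (- \<sigma> * w)"
    if "g \<in> borel_measurable borel" for g :: "real \<Rightarrow> real"
    using w that unfolding \<mu>_def by (subst integral_distr) (auto simp: algebra_simps)
  have "prob_space \<mu>" unfolding \<mu>_def
    by (rule prob_space.prob_space_distr) (auto simp: measure_pmf.prob_space_axioms)
  moreover have "sets \<mu> = sets borel"
    by (simp add: \<mu>_def)
  moreover have "integrable \<mu> (\<lambda>y. \<bar>y\<bar> ^ 3)" unfolding \<mu>_def
    by (subst integrable_distr_eq) (auto intro: integrable_measure_pmf_finite)
  moreover have "(\<integral>y. y \<partial>\<mu>) = 0"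
    by (simp add: integral_\<mu> algebra_simps)
  moreover have second: "(\<integral>y. y\<^sup>2 \<partial>\<mu>) = w * (1 - w)"
    using \<sigma> by (auto simp: integral_\<mu> power2_eq_square algebra_simps)
  moreover have third: "(\<integral>y. \<bar>y\<bar> ^ 3 \<partial>\<mu>) = w * (1 - w) * (w\<^sup>2 + (1 - w)\<^sup>2)"
    using \<sigma> w by (auto simp: integral_\<mu> abs_mult power2_eq_square power3_eq_cube algebra_simps)
  ultimately have "\<bar>measure (PiM {..<K} (\<lambda>_. \<mu>))
        {\<omega> \<in> space (PiM {..<K} (\<lambda>_. \<mu>)). (\<Sum>i<K. \<omega> i) / sqrt (real K * (w * (1 - w))) \<le> 0}
      - std_normal_cdf 0\<bar>
      \<le> C / sqrt (real K) * (w * (1 - w) * (w\<^sup>2 + (1 - w)\<^sup>2)) / (w * (1 - w)) powr (3/2)"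
    using C[unfolded berry_esseen_const_def, rule_format, of \<mu> K 0] K w by (simp add: second third)
  also have "C / sqrt (real K) * (w * (1 - w) * (w\<^sup>2 + (1 - w)\<^sup>2)) / (w * (1 - w)) powr (3/2)
      = C * (w\<^sup>2 + (1 - w)\<^sup>2) / sqrt (real K * w * (1 - w))"
    using w by (simp add: powr_three_halves real_sqrt_mult mult.assoc)
  finally show ?thesis
    by (simp only: std_normal_cdf_zero)
qed

lemma binomial_tail_berry_esseen:
  assumes C: "berry_esseen_const C" and w: "0 < w" "w < 1" and K: "K > 0"
    and \<sigma>: "\<sigma> = 1 \<or> \<sigma> = -1"
  shows "measure_pmf.prob (binomial_pmf K w) {j. \<sigma> * (real j - real K * w) \<le> 0}
           \<le> 1/2 + min (1/2) (C * (w\<^sup>2 + (1 - w)\<^sup>2) / sqrt (real K * w * (1 - w)))"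
proof -
  define \<mu> where "\<mu> = distr (measure_pmf (map_pmf (\<lambda>b. \<sigma> * (of_bool b - w)) (bernoulli_pmf w))) borel id"
  have "sqrt (real K * (w * (1 - w))) > 0"
    using K w by simp
  then have "{\<omega> \<in> space (PiM {..<K} (\<lambda>_. \<mu>)). (\<Sum>i<K. \<omega> i) / sqrt (real K * (w * (1 - w))) \<le> 0}
      = {\<omega> \<in> space (PiM {..<K} (\<lambda>_. borel)). (\<Sum>i<K. \<omega> i) \<in> {..0}}"
    by (auto simp: \<mu>_def space_PiM divide_le_0_iff)
  then have "measure_pmf.prob (binomial_pmf K w) {j. \<sigma> * (real j - real K * w) \<le> 0}
      = measure (PiM {..<K} (\<lambda>_. \<mu>))
          {\<omega> \<in> space (PiM {..<K} (\<lambda>_. \<mu>)). (\<Sum>i<K. \<omega> i) / sqrt (real K * (w * (1 - w))) \<le> 0}"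
    unfolding \<mu>_def using measure_PiM_bernoulli_sum[of "{..<K}" w "{..0}"] K w
    by (simp add: lessThan_empty_iff algebra_simps)
  also have "\<dots> \<le> 1/2 + C * (w\<^sup>2 + (1 - w)\<^sup>2) / sqrt (real K * w * (1 - w))"
    using berry_esseen_centred_bernoulli[OF C w K \<sigma>] unfolding \<mu>_def by linarith
  finally show ?thesis
    using measure_pmf.prob_le_1 by (simp add: min_def)
qed

lemma measure_pmf_prob_le_scaled:
  assumes fin: "finite (set_pmf P)" and c: "0 \<le> c"
    and le: "\<And>x. x \<in> A \<Longrightarrow> x \<in> set_pmf P \<Longrightarrow> pmf P x \<le> c * pmf Q x"
  shows "measure_pmf.prob P A \<le> c * measure_pmf.prob Q A"
proof -
  have "measure_pmf.prob P A = measure_pmf.prob P (A \<inter> set_pmf P)"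
    by (rule measure_Int_set_pmf[symmetric])
  also have "\<dots> = (\<Sum>x\<in>A \<inter> set_pmf P. pmf P x)"
    using fin by (simp add: measure_measure_pmf_finite)
  also have "\<dots> \<le> (\<Sum>x\<in>A \<inter> set_pmf P. c * pmf Q x)"
    by (intro sum_mono) (use le in auto)
  also have "\<dots> = c * measure_pmf.prob Q (A \<inter> set_pmf P)"
    using fin by (simp add: sum_distrib_left measure_measure_pmf_finite)
  also have "\<dots> \<le> c * measure_pmf.prob Q A"
    by (intro mult_left_mono measure_pmf.finite_measure_mono) (use c in auto)
  finally show ?thesis .
qed

lemma pmf_binomial_exponential_tilt:
  assumes z: "0 < z" "z < 1" and p: "0 < p" "p < 1"
  shows "pmf (binomial_pmf m p) j
    = exp (real j * ln (p / z) + real (m - j) * ln ((1 - p) / (1 - z))) * pmf (binomial_pmf m z) j"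
  using assms by (simp add: exp_add exp_of_nat_mult power_divide)

lemma binomial_exponential_tilt_le:
  assumes z: "0 < z" "z < 1" and p: "0 < p" "p < 1"
    and sign: "\<And>j. j \<in> A \<Longrightarrow> j \<le> m \<Longrightarrow>
      (real j - real m * z) * (ln (p / z) - ln ((1 - p) / (1 - z))) \<le> 0"
  shows "measure_pmf.prob (binomial_pmf m p) A
    \<le> exp (real m * rateM z p) * measure_pmf.prob (binomial_pmf m z) A"
proof (rule measure_pmf_prob_le_scaled)
  fix j assume j: "j \<in> A" "j \<in> set_pmf (binomial_pmf m p)"
  then have "j \<le> m" using p by simp
  then have "real j * ln (p / z) + real (m - j) * ln ((1 - p) / (1 - z))
      = real m * rateM z p + (real j - real m * z) * (ln (p / z) - ln ((1 - p) / (1 - z)))"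
    by (simp add: rateM_def of_nat_diff algebra_simps)
  also have "\<dots> \<le> real m * rateM z p"
    using sign j \<open>j \<le> m\<close> by simp
  finally show "pmf (binomial_pmf m p) j \<le> exp (real m * rateM z p) * pmf (binomial_pmf m z) j"
    unfolding pmf_binomial_exponential_tilt[OF z p] by (intro mult_right_mono) auto
qed (use p in auto)

lemma binomial_lower_tail_bound:
  assumes C: "berry_esseen_const C" and z: "0 < z" "z < p" and p: "p < 1" and m: "m > 0"
  shows "measure_pmf.prob (binomial_pmf m p) {j. real j \<le> real m * z}
    \<le> (1/2 + min (1/2) (C * (z\<^sup>2 + (1 - z)\<^sup>2) / sqrt (real m * z * (1 - z))))
        * exp (real m * rateM z p)"
proof -
  have "ln ((1 - p) / (1 - z)) \<le> 0" "0 \<le> ln (p / z)"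
    using z p by auto
  then have "0 \<le> ln (p / z) - ln ((1 - p) / (1 - z))"
    by linarith
  then have "measure_pmf.prob (binomial_pmf m p) {j. real j \<le> real m * z}
      \<le> exp (real m * rateM z p) * measure_pmf.prob (binomial_pmf m z) {j. real j \<le> real m * z}"
    using z p by (intro binomial_exponential_tilt_le) (auto intro!: mult_nonpos_nonneg)
  also have "measure_pmf.prob (binomial_pmf m z) {j. real j \<le> real m * z}
      \<le> 1/2 + min (1/2) (C * (z\<^sup>2 + (1 - z)\<^sup>2) / sqrt (real m * z * (1 - z)))"
    using binomial_tail_berry_esseen[OF C _ _ m, of z 1] z p by simp
  finally show ?thesis
    by (simp add: mult.commute)
qed

lemma binomial_upper_tail_bound:
  assumes C: "berry_esseen_const C" and z: "p < z" "z < 1" and p: "0 < p" and m: "m > 0"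
  shows "measure_pmf.prob (binomial_pmf m p) {j. real m * z \<le> real j}
    \<le> (1/2 + min (1/2) (C * (z\<^sup>2 + (1 - z)\<^sup>2) / sqrt (real m * z * (1 - z))))
        * exp (real m * rateM z p)"
proof -
  have "ln (p / z) \<le> 0" "0 \<le> ln ((1 - p) / (1 - z))"
    using z p by auto
  then have "ln (p / z) - ln ((1 - p) / (1 - z)) \<le> 0"
    by linarith
  then have "measure_pmf.prob (binomial_pmf m p) {j. real m * z \<le> real j}
      \<le> exp (real m * rateM z p) * measure_pmf.prob (binomial_pmf m z) {j. real m * z \<le> real j}"
    using z p by (intro binomial_exponential_tilt_le) (auto intro!: mult_nonneg_nonpos)
  also have "measure_pmf.prob (binomial_pmf m z) {j. real m * z \<le> real j}
      \<le> 1/2 + min (1/2) (C * (z\<^sup>2 + (1 - z)\<^sup>2) / sqrt (real m * z * (1 - z)))"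
    using binomial_tail_berry_esseen[OF C _ _ m, of z "-1"] z p by simp
  finally show ?thesis
    by (simp add: mult.commute)
qed

lemma measure_bernoulli_pmf:
  assumes "0 \<le> p" "p \<le> 1"
  shows "measure_pmf.prob (bernoulli_pmf p) B = of_bool (True \<in> B) * p + of_bool (False \<in> B) * (1 - p)"
proof -
  have "B = {b\<in>UNIV. b \<in> B}" by simp
  then have "measure_pmf.prob (bernoulli_pmf p) B = (\<Sum>b\<in>UNIV. if b \<in> B then pmf (bernoulli_pmf p) b else 0)"
    by (metis finite measure_measure_pmf_finite sum.inter_filter)
  then show ?thesis using assms by (simp add: UNIV_bool)
qed

lemma (in prob_space) distr_eq_bernoulli_pmf:
  fixes X :: "'a \<Rightarrow> real"
  assumes X: "X \<in> borel_measurable M" and AE_01: "AE \<omega> in M. X \<omega> \<in> {0, 1}"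
    and one: "prob {\<omega> \<in> space M. X \<omega> = 1} = p"
  shows "distr M borel X = distr (measure_pmf (map_pmf of_bool (bernoulli_pmf p))) borel id"
proof (rule measure_eqI)
  let ?E = "\<lambda>x. {\<omega> \<in> space M. X \<omega> = x}"
  have p: "0 \<le> p" "p \<le> 1"
    using one by auto
  have "prob (?E 0 \<union> ?E 1) = 1"
    using X AE_01 by (subst prob_eq_1) (auto elim!: AE_mp)
  then have zero: "prob (?E 0) = 1 - p"
    using X one by (subst (asm) finite_measure_Union) auto
  fix A assume "A \<in> sets (distr M borel X)"
  then have A: "A \<in> sets borel" by simp
  have "emeasure (distr M borel X) A = prob {\<omega> \<in> space M. X \<omega> \<in> A}"
    using A X by (simp add: emeasure_distr emeasure_eq_measure vimage_def Int_def conj_commute)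
  also have "prob {\<omega> \<in> space M. X \<omega> \<in> A} = prob ((if 1 \<in> A then ?E 1 else {}) \<union> (if 0 \<in> A then ?E 0 else {}))"
    using AE_01 X A by (intro finite_measure_eq_AE) (auto elim!: AE_mp)
  also have "\<dots> = of_bool (1 \<in> A) * p + of_bool (0 \<in> A) * (1 - p)"
    using X by (subst finite_measure_Union) (auto simp: one zero)
  also have "ennreal \<dots> = emeasure (distr (measure_pmf (map_pmf of_bool (bernoulli_pmf p))) borel id) A"
    using A p by (simp add: emeasure_distr measure_pmf.emeasure_eq_measure measure_bernoulli_pmf vimage_def)
  finally show "emeasure (distr M borel X) A = \<dots>" .
qed simp

lemma binomial_pmf_tendsto_zero:
  assumes p: "0 < p" "p < 1"
  shows "(\<lambda>K. pmf (binomial_pmf K p) j) \<longlonglongrightarrow> 0"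
proof (rule tendsto_sandwich)
  show "\<forall>\<^sub>F K in sequentially. 0 \<le> pmf (binomial_pmf K p) j"
    by simp
  show "\<forall>\<^sub>F K in sequentially. pmf (binomial_pmf K p) j \<le> real K ^ j * (1 - p) ^ K / (1 - p) ^ j"
    using eventually_ge_at_top[of j]
  proof eventually_elim
    case (elim K)
    have "real (K choose j) \<le> real K ^ j"
      by (metis binomial_le_pow elim of_nat_le_iff of_nat_power)
    moreover have "p ^ j \<le> 1"
      using p by (simp add: power_le_one)
    ultimately have "real (K choose j) * p ^ j * (1 - p) ^ (K - j) \<le> real K ^ j * 1 * (1 - p) ^ (K - j)"
      using p by (intro mult_mono) auto
    then show ?case
      using elim p by (simp add: power_diff)
  qed
  show "(\<lambda>K. real K ^ j * (1 - p) ^ K / (1 - p) ^ j) \<longlonglongrightarrow> 0"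
    using p by real_asymp
qed simp

lemma unit_steps_Nats:
  fixes s :: "nat \<Rightarrow> real"
  assumes "s 0 = 0" and "\<And>k. s (Suc k) = s k \<or> s (Suc k) = s k + 1"
  shows "s k \<in> \<nat>"
proof (induction k)
  case (Suc k)
  then show ?case using assms(2)[of k] by (auto intro: Nats_add)
qed (use assms in simp)

lemma unit_steps_attains:
  fixes s :: "nat \<Rightarrow> real"
  assumes s0: "s 0 = 0" and step: "\<And>k. s (Suc k) = s k \<or> s (Suc k) = s k + 1"
    and "real g \<le> s k"
  shows "\<exists>j. s j = real g"
  using \<open>real g \<le> s k\<close>
proof (induction k)
  case 0
  then show ?case using s0 by auto
next
  case (Suc k)
  show ?case
  proof (cases "real g \<le> s k")
    case True
    then show ?thesis by (rule Suc.IH)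
  next
    case False
    obtain t where "s k = real t"
      using unit_steps_Nats[OF s0 step] by (auto elim: Nats_cases)
    then have "s (Suc k) = real g"
      using False Suc.prems step[of k] by auto
    then show ?thesis ..
  qed
qed

lemma Ints_divide_posE:
  fixes x z :: real
  assumes "x / z \<in> \<int>" "0 < x" "0 < z"
  obtains m :: nat where "0 < m" "x = real m * z"
proof -
  obtain k where k: "x / z = real_of_int k"
    using assms(1) by (auto elim: Ints_cases)
  moreover have "0 < k"
    using assms k by (metis divide_pos_pos of_int_0_less_iff)
  ultimately show ?thesis
    using assms by (intro that[of "nat k"]) (auto simp: field_simps)
qed

locale bernoulli_trials = prob_space M for M :: "'a measure" +
  fixes X :: "nat \<Rightarrow> 'a \<Rightarrow> real" and p :: real
  assumes random_variable_X: "\<And>i. i \<ge> 1 \<Longrightarrow> X i \<in> borel_measurable M"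
    and indep_X: "indep_vars (\<lambda>_. borel) X {1..}"
    and AE_X_01: "\<And>i. i \<ge> 1 \<Longrightarrow> AE \<omega> in M. X i \<omega> \<in> {0, 1}"
    and prob_X_eq_1: "\<And>i. i \<ge> 1 \<Longrightarrow> prob {\<omega> \<in> space M. X i \<omega> = 1} = p"
    and p_pos: "0 < p" and p_less_1: "p < 1"
begin

definition successes :: "nat \<Rightarrow> 'a \<Rightarrow> real" where
  "successes k \<omega> = (\<Sum>i\<in>{1..k}. X i \<omega>)"

lemma successes_0 [simp]: "successes 0 \<omega> = 0"
  by (simp add: successes_def)

lemma borel_measurable_successes[measurable]: "successes k \<in> borel_measurable M"
  unfolding successes_def using random_variable_X by auto

lemma trials_needed_eq: "trials_needed X g \<omega> = (LEAST k. successes k \<omega> = real g)"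
  by (simp add: trials_needed_def successes_def)

lemma prob_successes_in:
  assumes K: "K > 0" and B: "B \<in> sets borel"
  shows "prob {\<omega> \<in> space M. successes K \<omega> \<in> B} = measure_pmf.prob (binomial_pmf K p) {j. real j \<in> B}"
proof -
  let ?I = "{1..K}" and ?X = "\<lambda>\<omega>. \<lambda>i\<in>{1..K}. X i \<omega>"
  let ?A = "{x \<in> space (PiM ?I (\<lambda>_. borel)). (\<Sum>i\<in>?I. x i) \<in> B}"
  have "distr M (PiM ?I (\<lambda>_. borel)) ?X = PiM ?I (\<lambda>i. distr M borel (X i))"
    using K random_variable_X indep_vars_subset[OF indep_X, of ?I]
    by (subst indep_vars_iff_distr_eq_PiM'[symmetric]) auto
  also have "\<dots> = PiM ?I (\<lambda>_. distr (measure_pmf (map_pmf of_bool (bernoulli_pmf p))) borel id)"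
    by (intro PiM_cong distr_eq_bernoulli_pmf random_variable_X AE_X_01 prob_X_eq_1) auto
  finally have distr_X: "distr M (PiM ?I (\<lambda>_. borel)) ?X = \<dots>" .
  have "?X \<in> measurable M (PiM ?I (\<lambda>_. borel))"
    by (rule measurable_restrict) (auto intro: random_variable_X)
  moreover have "?A \<in> sets (PiM ?I (\<lambda>_. borel))"
    using B by measurable
  ultimately have "prob {\<omega> \<in> space M. successes K \<omega> \<in> B} = measure (distr M (PiM ?I (\<lambda>_. borel)) ?X) ?A"
    by (subst measure_distr) (auto intro!: arg_cong[where f=prob] simp: successes_def space_PiM)
  also have "\<dots> = measure_pmf.prob (binomial_pmf K p) {j. real j \<in> B}"
    unfolding distr_X using measure_PiM_bernoulli_sum[of ?I p B of_bool] K B p_pos p_less_1 by simp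
  finally show ?thesis .
qed

lemma AE_successes_unit_steps:
  "AE \<omega> in M. \<forall>k. successes (Suc k) \<omega> = successes k \<omega> \<or> successes (Suc k) \<omega> = successes k \<omega> + 1"
proof -
  have "AE \<omega> in M. \<forall>i. 1 \<le> i \<longrightarrow> X i \<omega> \<in> {0, 1}"
    unfolding AE_all_countable using AE_X_01 by auto
  then show ?thesis
    by eventually_elim (auto simp: successes_def atLeastAtMostSuc_conv)
qed

lemma AE_successes_attains: "AE \<omega> in M. \<exists>k. successes k \<omega> = real g"
proof -
  define N where "N = {\<omega> \<in> space M. \<forall>k. successes k \<omega> < real g}"
  have "(\<lambda>K. \<Sum>j<g. pmf (binomial_pmf K p) j) \<longlonglongrightarrow> 0"
    by (intro tendsto_null_sum binomial_pmf_tendsto_zero p_pos p_less_1)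
  moreover have "\<forall>\<^sub>F K in sequentially. prob N \<le> (\<Sum>j<g. pmf (binomial_pmf K p) j)"
    using eventually_gt_at_top[of 0]
  proof eventually_elim
    case (elim K)
    have "prob N \<le> prob {\<omega> \<in> space M. successes K \<omega> \<in> {..<real g}}"
      by (intro finite_measure_mono) (auto simp: N_def)
    also have "\<dots> = measure_pmf.prob (binomial_pmf K p) {..<g}"
      using prob_successes_in[OF elim, of "{..<real g}"] by (simp add: lessThan_def)
    finally show ?case
      by (simp add: measure_measure_pmf_finite)
  qed
  ultimately have "prob N \<le> 0"
    by (rule tendsto_lowerbound) simp_all
  moreover have "N \<in> sets M"
    unfolding N_def by measurable
  ultimately have "AE \<omega> in M. \<omega> \<notin> N"
    by (intro AE_not_in) (simp add: emeasure_eq_measure null_sets_def measure_le_0_iff)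
  then show ?thesis
    using AE_successes_unit_steps AE_space
  proof eventually_elim
    case (elim \<omega>)
    then obtain k where "real g \<le> successes k \<omega>"
      unfolding N_def by (auto simp: not_less)
    then show ?case
      using elim(2) by (intro unit_steps_attains[of "\<lambda>k. successes k \<omega>"]) simp_all
  qed
qed

lemma AE_first_passage:
  assumes "g > 0"
  shows "AE \<omega> in M. 0 < trials_needed X g \<omega> \<and> successes (trials_needed X g \<omega>) \<omega> = real g
    \<and> mono (\<lambda>k. successes k \<omega>)"
  using AE_successes_attains[of g] AE_successes_unit_steps
proof eventually_elim
  case (elim \<omega>)
  have passage: "successes (trials_needed X g \<omega>) \<omega> = real g"
    using elim(1) unfolding trials_needed_eq by (rule LeastI_ex)
  have "trials_needed X g \<omega> \<noteq> 0"
  proof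
    assume "trials_needed X g \<omega> = 0"
    with passage have "real g = 0" by simp
    with assms show False by simp
  qed
  moreover have "mono (\<lambda>k. successes k \<omega>)"
  proof (rule incseq_SucI)
    fix k
    show "successes k \<omega> \<le> successes (Suc k) \<omega>"
      using elim(2)[rule_format, of k] by linarith
  qed
  ultimately show ?case
    using passage by simp
qed

lemma prob_trials_needed_lower_tail:
  assumes C: "berry_esseen_const C" and g: "g > 0" and z: "0 < z" "z < p" and "real g / z \<in> \<int>"
  shows "prob {\<omega> \<in> space M. real g / real (trials_needed X g \<omega>) \<le> z}
    \<le> (1/2 + min (1/2) (C * (z\<^sup>2 + (1 - z)\<^sup>2) / sqrt (real g * (1 - z)))) * exp (real g / z * rateM z p)"
proof -
  obtain m where m: "0 < m" "real g = real m * z"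
    using Ints_divide_posE[OF \<open>real g / z \<in> \<int>\<close>] g z by auto
  have "AE \<omega> in M. real g / real (trials_needed X g \<omega>) \<le> z \<longrightarrow> successes m \<omega> \<le> real m * z"
    using AE_first_passage[OF g]
  proof eventually_elim
    case (elim \<omega>)
    show ?case
    proof
      assume "real g / real (trials_needed X g \<omega>) \<le> z"
      then have "m \<le> trials_needed X g \<omega>"
        using elim m z by (simp add: pos_divide_le_eq)
      then show "successes m \<omega> \<le> real m * z"
        using elim m(2) by (metis incseqD)
    qed
  qed
  then have "prob {\<omega> \<in> space M. real g / real (trials_needed X g \<omega>) \<le> z}
      \<le> prob {\<omega> \<in> space M. successes m \<omega> \<in> {..real m * z}}"
    by (intro finite_measure_mono_AE) (auto elim: eventually_mono)
  also have "\<dots> = measure_pmf.prob (binomial_pmf m p) {j. real j \<le> real m * z}"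
    using prob_successes_in[OF m(1), of "{..real m * z}"] by (simp add: atMost_def)
  also have "\<dots> \<le> (1/2 + min (1/2) (C * (z\<^sup>2 + (1 - z)\<^sup>2) / sqrt (real m * z * (1 - z))))
      * exp (real m * rateM z p)"
    using binomial_lower_tail_bound[OF C z p_less_1 m(1)] .
  also have "\<dots> = (1/2 + min (1/2) (C * (z\<^sup>2 + (1 - z)\<^sup>2) / sqrt (real g * (1 - z))))
      * exp (real g / z * rateM z p)"
    using m z by simp
  finally show ?thesis .
qed

lemma prob_trials_needed_upper_tail:
  assumes C: "berry_esseen_const C" and g: "g > 0" and z: "p < z" "z < 1" and "real g / z \<in> \<int>"
  shows "prob {\<omega> \<in> space M. real g / real (trials_needed X g \<omega>) \<ge> z}
    \<le> (1/2 + min (1/2) (C * (z\<^sup>2 + (1 - z)\<^sup>2) / sqrt (real g * (1 - z)))) * exp (real g / z * rateM z p)"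
proof -
  have "0 < z"
    using z p_pos by simp
  then obtain m where m: "0 < m" "real g = real m * z"
    using Ints_divide_posE[OF \<open>real g / z \<in> \<int>\<close>] g by auto
  have "AE \<omega> in M. real g / real (trials_needed X g \<omega>) \<ge> z \<longrightarrow> successes m \<omega> \<ge> real m * z"
    using AE_first_passage[OF g]
  proof eventually_elim
    case (elim \<omega>)
    show ?case
    proof
      assume "real g / real (trials_needed X g \<omega>) \<ge> z"
      then have "trials_needed X g \<omega> \<le> m"
        using elim m \<open>0 < z\<close> by (simp add: pos_le_divide_eq)
      then show "successes m \<omega> \<ge> real m * z"
        using elim m(2) by (metis incseqD)
    qed
  qed
  then have "prob {\<omega> \<in> space M. real g / real (trials_needed X g \<omega>) \<ge> z}
      \<le> prob {\<omega> \<in> space M. successes m \<omega> \<in> {real m * z..}}"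
    by (intro finite_measure_mono_AE) (auto elim: eventually_mono)
  also have "\<dots> = measure_pmf.prob (binomial_pmf m p) {j. real m * z \<le> real j}"
    using prob_successes_in[OF m(1), of "{real m * z..}"] by (simp add: atLeast_def)
  also have "\<dots> \<le> (1/2 + min (1/2) (C * (z\<^sup>2 + (1 - z)\<^sup>2) / sqrt (real m * z * (1 - z))))
      * exp (real m * rateM z p)"
    using binomial_upper_tail_bound[OF C z p_pos m(1)] .
  also have "\<dots> = (1/2 + min (1/2) (C * (z\<^sup>2 + (1 - z)\<^sup>2) / sqrt (real g * (1 - z))))
      * exp (real g / z * rateM z p)"
    using m \<open>0 < z\<close> by simp
  finally show ?thesis .
qed

end

theorem corollary2:
  fixes M :: "'a measure" and X :: "nat \<Rightarrow> 'a \<Rightarrow> real"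
    and p C :: real and \<gamma> :: nat
  assumes "prob_space M"
    and rv: "\<And>i. i \<ge> 1 \<Longrightarrow> X i \<in> borel_measurable M"
    and indep: "prob_space.indep_vars M (\<lambda>_. borel) X {1..}"
    and bern01: "\<And>i. i \<ge> 1 \<Longrightarrow> AE \<omega> in M. X i \<omega> \<in> {0, 1}"
    and bernp: "\<And>i. i \<ge> 1 \<Longrightarrow> measure M {\<omega> \<in> space M. X i \<omega> = 1} = p"
    and p: "0 < p" "p < 1"
    and \<gamma>: "\<gamma> > 0"
    and C: "berry_esseen_const C"
  shows
    "(\<forall>z. 0 < z \<and> z < p \<and> real \<gamma> / z \<in> \<int> \<longrightarrow>
       measure M {\<omega> \<in> space M. real \<gamma> / real (trials_needed X \<gamma> \<omega>) \<le> z}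
         \<le> (1/2 + min (1/2) (C * (z\<^sup>2 + (1 - z)\<^sup>2) / sqrt (real \<gamma> * (1 - z))))
             * exp (real \<gamma> / z * rateM z p)) \<and>
    (\<forall>z. p < z \<and> z < 1 \<and> real \<gamma> / z \<in> \<int> \<longrightarrow>
       measure M {\<omega> \<in> space M. real \<gamma> / real (trials_needed X \<gamma> \<omega>) \<ge> z}
         \<le> (1/2 + min (1/2) (C * (z\<^sup>2 + (1 - z)\<^sup>2) / sqrt (real \<gamma> * (1 - z))))
             * exp (real \<gamma> / z * rateM z p))"
proof -
  interpret bernoulli_trials M X p
    using assms by (simp add: bernoulli_trials_def bernoulli_trials_axioms_def)
  show ?thesis
    using prob_trials_needed_lower_tail[OF C \<gamma>] prob_trials_needed_upper_tail[OF C \<gamma>] by blast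
qed

end
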